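(* Let $r,u>0$, $0<\alpha\le 2$, $\eta>0$ and $s\in\mathbb{C}\setminus\{0\}$. Then there exists $M>0$ such that \[ F^{\alpha}_{s,r}\circ F^{\alpha}_{us,u}=F^{\alpha}_{us,ur}\quad\text{on }\Gamma_{\eta,M} \] (all three functions, and the composition, being well defined there).
   Context: Branch conventions: for $w\in\mathbb{C}\setminus[0,\infty)$ and $p\in\{\alpha,1/\alpha\}$, $w^{p}:=e^{p\log_{(1)}w}$, where $\log_{(1)}$ is the branch of the logarithm with imaginary part in $(0,2\pi)$; for $w\in\mathbb{C}\setminus(-\infty,0]$, $w^{1/r}:=e^{\frac1r\operatorname{Log}w}$ with the principal logarithm (imaginary part in $(-\pi,\pi)$); $r^{1/\alpha}>0$ denotes the positive root. For $\eta,M>0$ let $\Gamma_{\eta,M}=\{z\in\mathbb{C}:\operatorname{Im}z>M,\ \operatorname{Im}z>\eta|\operatorname{Re}z|\}$. For $0<\alpha\le2$, $r>0$, $s\in\mathbb{C}\setminus\{0\}$ define \[ G^{\alpha}_{s,r}(z)=-r^{1/\alpha}\left(\frac{1-\big(1-s(-\tfrac1z)^{\alpha}\big)^{1/r}}{s}\right)^{1/\alpha}. \] For every $\eta>0$ there is $M>0$ such that on $\Gamma_{\eta,M}$ every power in this formula is applied to a point in the domain of its branch, so $G^\alpha_{s,r}$ is analytic and nonvanishing there; set $F^{\alpha}_{s,r}:=1/G^{\alpha}_{s,r}$ on such a domain. *)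

theory Defs
  imports "HOL-Analysis.Analysis"
begin

(* branch of log with imaginary part in (0, 2 pi), on C \ [0,oo) *)
definition log1 :: "complex \<Rightarrow> complex" where
  "log1 w = Ln (- w) + \<i> * complex_of_real pi"

definition pow1 :: "complex \<Rightarrow> real \<Rightarrow> complex" where
  "pow1 w p = exp (complex_of_real p * log1 w)"

definition ppow :: "complex \<Rightarrow> real \<Rightarrow> complex" where
  "ppow w p = exp (complex_of_real p * Ln w)"

definition nonneg_reals :: "complex set" where
  "nonneg_reals = {w. Im w = 0 \<and> 0 \<le> Re w}"

definition nonpos_reals :: "complex set" where
  "nonpos_reals = {w. Im w = 0 \<and> Re w \<le> 0}"

definition G_fun :: "real \<Rightarrow> complex \<Rightarrow> real \<Rightarrow> complex \<Rightarrow> complex" where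
  "G_fun \<alpha> s r z =
     - complex_of_real (r powr (1 / \<alpha>)) *
       pow1 ((1 - ppow (1 - s * pow1 (- 1 / z) \<alpha>) (1 / r)) / s) (1 / \<alpha>)"

definition F_fun :: "real \<Rightarrow> complex \<Rightarrow> real \<Rightarrow> complex \<Rightarrow> complex" where
  "F_fun \<alpha> s r z = 1 / G_fun \<alpha> s r z"

(* every power in the formula of G is applied to a point of the domain of its branch,
   and G does not vanish, so F = 1/G is well defined at z *)
definition well_defined_at :: "real \<Rightarrow> complex \<Rightarrow> real \<Rightarrow> complex \<Rightarrow> bool" where
  "well_defined_at \<alpha> s r z \<longleftrightarrow>
     z \<noteq> 0 \<and>
     - 1 / z \<notin> nonneg_reals \<and>
     1 - s * pow1 (- 1 / z) \<alpha> \<notin> nonpos_reals \<and>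
     (1 - ppow (1 - s * pow1 (- 1 / z) \<alpha>) (1 / r)) / s \<notin> nonneg_reals \<and>
     G_fun \<alpha> s r z \<noteq> 0"

definition Gamma_dom :: "real \<Rightarrow> real \<Rightarrow> complex set" where
  "Gamma_dom \<eta> M = {z. Im z > M \<and> Im z > \<eta> * \<bar>Re z\<bar>}"

end

theory Submission
  imports Defs
begin

(* Write w = -1/z and L = log1 w.  On Gamma_{eta,M} the argument Im L stays in the
   strip (gamma, pi - gamma) with gamma = arctan eta, and |w| < 1/M.  With
   x = s' w^alpha and the quotient  q_p(x) = p (1 - (1 - x)^(1/p)) / x,  which tends
   to 1 as x -> 0, one finds  G_{s',p}(z) = - exp (L + Ln q_p(x) / alpha)  as soon as
   q_p(x) is close to 1 (G_fun_at_log_point).  The key normal form behind this is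
   G_fun_exp_form: if the inner expression of G equals exp T / r with
   0 < Im T < 2 pi, then G = - exp (T / alpha) and all branches are legitimate.
   Feeding F_{us,u}(z) into G_{s,r} reproduces the same inner expression as for
   G_{us,ur}(z) (G_fun_at_composite), because (1-x)^(1/u) raised to 1/r is
   (1-x)^(1/(ur)) for small x.  Finally, all needed smallness conditions hold for x
   near 0, and x = us (-1/z)^alpha is as small as we like on Gamma_{eta,M} for large M
   (eventually_at_0_on_Gamma_dom). *)

lemma log1_exp:
  assumes "0 < Im T" "Im T < 2 * pi"
  shows "log1 (exp T) = T"
proof -
  have "Ln (- exp T) = T - \<i> * pi"
    using assms by (subst Ln_exp [symmetric]) (auto simp: exp_diff)
  then show ?thesis unfolding log1_def by simp
qed

lemma exp_log1: "w \<noteq> 0 \<Longrightarrow> exp (log1 w) = w"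
  unfolding log1_def by (simp add: exp_add)

lemma exp_notin_nonneg_reals:
  assumes "0 < Im T" "Im T < 2 * pi"
  shows "exp T \<notin> nonneg_reals"
proof
  assume "exp T \<in> nonneg_reals"
  moreover have "exp T \<noteq> 0" by simp
  ultimately have "Im (Ln (- exp T)) = pi"
    by (subst Im_Ln_eq_pi) (auto simp: nonneg_reals_def complex_eq_iff)
  then have "Im (log1 (exp T)) = 2 * pi" unfolding log1_def by simp
  with assms show False by (simp add: log1_exp)
qed

lemma exp_notin_nonpos_reals:
  assumes "\<bar>Im T\<bar> < pi"
  shows "exp T \<notin> nonpos_reals"
proof
  assume "exp T \<in> nonpos_reals"
  moreover have "exp T \<noteq> 0" by simp
  ultimately have "Im (Ln (exp T)) = pi"
    by (subst Im_Ln_eq_pi) (auto simp: nonpos_reals_def complex_eq_iff)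
  with assms show False by (simp add: Ln_exp abs_less_iff)
qed

lemma G_fun_exp_form:
  assumes r: "r > 0" and a: "\<alpha> > 0" and s: "s \<noteq> 0"
    and w: "- 1 / z \<notin> nonneg_reals"
    and b: "1 - s * pow1 (- 1 / z) \<alpha> \<notin> nonpos_reals"
    and phi: "(1 - ppow (1 - s * pow1 (- 1 / z) \<alpha>) (1 / r)) / s = exp T / of_real r"
    and T: "0 < Im T" "Im T < 2 * pi"
  shows "well_defined_at \<alpha> s r z" and "G_fun \<alpha> s r z = - exp (T / of_real \<alpha>)"
proof -
  define T' where "T' = T - of_real (ln r)"
  have phi': "exp T / of_real r = exp T'"
    using r by (simp add: T'_def exp_diff exp_of_real)
  have T': "0 < Im T'" "Im T' < 2 * pi" using T by (simp_all add: T'_def)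
  have "G_fun \<alpha> s r z = - of_real (r powr (1 / \<alpha>)) * pow1 (exp T') (1 / \<alpha>)"
    unfolding G_fun_def phi phi' ..
  also have "\<dots> = - exp (of_real (ln r / \<alpha>)) * exp (of_real (1 / \<alpha>) * T')"
    using r unfolding pow1_def log1_exp[OF T'] by (simp add: powr_def flip: exp_of_real)
  also have "\<dots> = - exp (T / of_real \<alpha>)"
    using a by (simp add: T'_def field_simps flip: exp_add)
  finally show G: "G_fun \<alpha> s r z = - exp (T / of_real \<alpha>)" .
  have "z \<noteq> 0" using w by (auto simp: nonneg_reals_def)
  then show "well_defined_at \<alpha> s r z"
    unfolding well_defined_at_def phi phi' G
    using w b exp_notin_nonneg_reals[OF T'] by simp
qed

(* q_p(x) = p (1 - (1 - x)^(1/p)) / x, the normalised difference quotient of the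
   principal root at 1; it tends to 1 as x -> 0. *)
definition root_quotient :: "real \<Rightarrow> complex \<Rightarrow> complex" where
  "root_quotient p x = of_real p * (1 - ppow (1 - x) (1 / p)) / x"

lemma one_minus_root_eq:
  assumes "p > 0" "x \<noteq> 0"
  shows "1 - ppow (1 - x) (1 / p) = x * root_quotient p x / of_real p"
  using assms by (simp add: root_quotient_def)

(* q_p(x) -> 1, since (1 - x)^(1/p) has derivative -1/p at x = 0. *)
lemma root_quotient_tendsto:
  assumes p: "p > 0"
  shows "(root_quotient p \<longlongrightarrow> 1) (at 0)"
proof -
  define f where "f x = ppow (1 - x) (1 / p)" for x
  have "(f has_field_derivative - of_real (1 / p)) (at 0)"
    using p unfolding f_def ppow_def by (auto intro!: derivative_eq_intros)
  then have "((\<lambda>x. (f x - f 0) / (x - 0)) \<longlongrightarrow> - of_real (1 / p)) (at 0)"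
    by (simp add: has_field_derivative_iff)
  then have "((\<lambda>x. - of_real p * ((f x - f 0) / (x - 0))) \<longlongrightarrow> - of_real p * - of_real (1 / p)) (at 0)"
    by (rule tendsto_mult_left)
  moreover have "(\<lambda>x. - of_real p * ((f x - f 0) / (x - 0))) = root_quotient p"
    using p by (auto simp: f_def ppow_def root_quotient_def field_simps)
  ultimately show ?thesis using p by simp
qed

lemma root_quotient_eventually:
  assumes "p > 0" "\<beta> > 0"
  shows "eventually (\<lambda>x. root_quotient p x \<noteq> 0 \<and> \<bar>Im (Ln (root_quotient p x))\<bar> < \<beta>) (at 0)"
proof -
  have lim: "(root_quotient p \<longlongrightarrow> 1) (at 0)" by (rule root_quotient_tendsto) fact
  have "((\<lambda>x. Ln (root_quotient p x)) \<longlongrightarrow> Ln 1) (at 0)" by (rule tendsto_Ln[OF lim]) simp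
  then have "eventually (\<lambda>x. dist (Ln (root_quotient p x)) 0 < \<beta>) (at 0)"
    using assms(2) by (simp add: tendsto_iff)
  moreover have "eventually (\<lambda>x. dist (root_quotient p x) 1 < 1) (at 0)"
    using lim by (simp add: tendsto_iff)
  ultimately show ?thesis
  proof eventually_elim
    case (elim x)
    then show ?case using abs_Im_le_cmod[of "Ln (root_quotient p x)"] by auto
  qed
qed

lemma strip_bound:
  fixes \<alpha> \<gamma> l b :: real
  assumes "0 < \<alpha>" "\<alpha> \<le> 2" "\<gamma> < l" "l < pi - \<gamma>" "\<bar>b\<bar> < \<alpha> * \<gamma> / 2"
  shows "0 < \<alpha> * l + b" "\<alpha> * l + b < 2 * pi"
proof -
  have "\<alpha> * \<gamma> < \<alpha> * l" "\<alpha> * l < \<alpha> * pi - \<alpha> * \<gamma>"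
    using assms by (simp_all add: right_diff_distrib[symmetric])
  moreover have "\<alpha> * pi \<le> 2 * pi" by (rule mult_right_mono) (use assms(2) in auto)
  ultimately show "0 < \<alpha> * l + b" "\<alpha> * l + b < 2 * pi"
    using assms(5) unfolding abs_less_iff by linarith+
qed

lemma G_fun_at_log_point:
  assumes p: "p > 0" and a: "0 < \<alpha>" "\<alpha> \<le> 2" and s: "s \<noteq> 0"
    and L: "\<gamma> < Im L" "Im L < pi - \<gamma>" "exp L = - 1 / z"
    and x: "x = s * exp (of_real \<alpha> * L)" "norm x < 1"
    and q: "root_quotient p x \<noteq> 0" "\<bar>Im (Ln (root_quotient p x))\<bar> < \<alpha> * \<gamma> / 2"
  shows "well_defined_at \<alpha> s p z"
    and "G_fun \<alpha> s p z = - exp (L + Ln (root_quotient p x) / of_real \<alpha>)"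
proof -
  define T where "T = of_real \<alpha> * L + Ln (root_quotient p x)"
  have T: "0 < Im T" "Im T < 2 * pi"
    unfolding T_def using strip_bound[OF a L(1,2) q(2)] by simp_all
  have "0 < \<alpha> * \<gamma>" using q(2) abs_ge_zero[of "Im (Ln (root_quotient p x))"] by linarith
  then have "0 < \<gamma>" using a(1) by (simp add: zero_less_mult_iff)
  then have L02pi: "0 < Im L" "Im L < 2 * pi" using L(1,2) by (simp_all add: pi_gt_zero)
  have pow: "pow1 (- 1 / z) \<alpha> = exp (of_real \<alpha> * L)"
    unfolding pow1_def L(3)[symmetric] log1_exp[OF L02pi] ..
  have x0: "x \<noteq> 0" using x(1) s by simp
  have "(1 - ppow (1 - x) (1 / p)) / s = exp (of_real \<alpha> * L) * root_quotient p x / of_real p"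
    using one_minus_root_eq[OF p x0] s x(1) by simp
  also have "\<dots> = exp T / of_real p" using q(1) by (simp add: T_def exp_add)
  finally have phi: "(1 - ppow (1 - s * pow1 (- 1 / z) \<alpha>) (1 / p)) / s = exp T / of_real p"
    unfolding pow x(1)[symmetric] .
  have b: "1 - s * pow1 (- 1 / z) \<alpha> \<notin> nonpos_reals"
    unfolding pow x(1)[symmetric] using x(2) complex_Re_le_cmod[of x] by (auto simp: nonpos_reals_def)
  have w: "- 1 / z \<notin> nonneg_reals"
    using exp_notin_nonneg_reals[OF L02pi] L(3) by simp
  note G = G_fun_exp_form[OF p a(1) s w b phi T]
  show "well_defined_at \<alpha> s p z" by (fact G(1))
  show "G_fun \<alpha> s p z = - exp (L + Ln (root_quotient p x) / of_real \<alpha>)"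
    using a unfolding G(2) T_def by (simp add: field_simps)
qed

(* The composite: if -1/w = exp (L + Ln q_u(x) / alpha), i.e. w = F_{us,u}(z), then
   G_{s,r}(w) has the value computed for G_{us,ur}(z).  The inner power collapses
   because ((1-x)^(1/u))^(1/r) = (1-x)^(1/(ur)) when |Im Ln (1-x)| < u pi. *)
lemma G_fun_at_composite:
  assumes r: "r > 0" and u: "u > 0" and a: "0 < \<alpha>" "\<alpha> \<le> 2" and s: "s \<noteq> 0"
    and L: "\<gamma> < Im L" "Im L < pi - \<gamma>"
    and x: "x = of_real u * s * exp (of_real \<alpha> * L)" "norm (Ln (1 - x)) < u * pi"
    and q1: "root_quotient u x \<noteq> 0" "\<bar>Im (Ln (root_quotient u x))\<bar> < \<alpha> * \<gamma> / 2"
    and q2: "root_quotient (u * r) x \<noteq> 0" "\<bar>Im (Ln (root_quotient (u * r) x))\<bar> < \<alpha> * \<gamma> / 2"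
    and w: "- 1 / w = exp (L + Ln (root_quotient u x) / of_real \<alpha>)"
  shows "well_defined_at \<alpha> s r w"
    and "G_fun \<alpha> s r w = - exp (L + Ln (root_quotient (u * r) x) / of_real \<alpha>)"
proof -
  define L1 where "L1 = L + Ln (root_quotient u x) / of_real \<alpha>"
  have "\<bar>Im (Ln (root_quotient u x)) / \<alpha>\<bar> < 1 * \<gamma> / 2"
    using q1(2) a(1) by (simp add: abs_divide divide_less_eq mult.commute)
  then have L1: "0 < Im L1" "Im L1 < 2 * pi"
    using strip_bound[of 1 \<gamma> "Im L"] L by (simp_all add: L1_def)
  have x0: "x \<noteq> 0" using x(1) u s by simp
  have pow: "pow1 (- 1 / w) \<alpha> = exp (of_real \<alpha> * L) * root_quotient u x"
  proof -
    have "of_real \<alpha> * L1 = of_real \<alpha> * L + Ln (root_quotient u x)"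
      using a(1) by (simp add: L1_def field_simps)
    then show ?thesis
      unfolding w L1_def[symmetric] pow1_def log1_exp[OF L1] using q1(1) by (simp add: exp_add)
  qed
  define T1 where "T1 = of_real (1 / u) * Ln (1 - x)"
  have inner: "1 - s * pow1 (- 1 / w) \<alpha> = exp T1"
    using one_minus_root_eq[OF u x0] u unfolding pow T1_def ppow_def
    by (simp add: x(1) field_simps)
  have "\<bar>Im T1\<bar> \<le> norm (Ln (1 - x)) / u"
    using u abs_Im_le_cmod[of "Ln (1 - x)"] by (simp add: T1_def abs_divide divide_right_mono)
  also have "\<dots> < pi" using x(2) u by (simp add: divide_less_eq mult.commute)
  finally have T1: "\<bar>Im T1\<bar> < pi" .
  have root: "ppow (exp T1) (1 / r) = ppow (1 - x) (1 / (u * r))"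
  proof -
    have "Ln (exp T1) = T1" using T1 by (intro Ln_exp) (auto simp: abs_less_iff)
    then show ?thesis by (simp add: ppow_def T1_def field_simps)
  qed
  define T where "T = of_real \<alpha> * L + Ln (root_quotient (u * r) x)"
  have T: "0 < Im T" "Im T < 2 * pi"
    unfolding T_def using strip_bound[OF a L q2(2)] by simp_all
  have ur: "u * r > 0" using u r by simp
  have phi: "(1 - ppow (1 - s * pow1 (- 1 / w) \<alpha>) (1 / r)) / s = exp T / of_real r"
    unfolding inner root one_minus_root_eq[OF ur x0]
    using u s q2(1) by (simp add: T_def exp_add x(1) field_simps)
  have nonneg: "- 1 / w \<notin> nonneg_reals"
    unfolding w L1_def[symmetric] by (fact exp_notin_nonneg_reals[OF L1])
  have nonpos: "1 - s * pow1 (- 1 / w) \<alpha> \<notin> nonpos_reals"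
    unfolding inner by (fact exp_notin_nonpos_reals[OF T1])
  note G = G_fun_exp_form[OF r a(1) s nonneg nonpos phi T]
  show "well_defined_at \<alpha> s r w" by (fact G(1))
  show "G_fun \<alpha> s r w = - exp (L + Ln (root_quotient (u * r) x) / of_real \<alpha>)"
    using a unfolding G(2) T_def by (simp add: field_simps)
qed

lemma sin_le_tan_bound:
  fixes t \<eta> :: real
  assumes "0 < t" "t \<le> arctan \<eta>"
  shows "sin t \<le> \<eta> * cos t"
proof -
  have lt: "arctan \<eta> < pi / 2" by (rule arctan_ubound)
  then have c: "cos t > 0" using assms by (intro cos_gt_zero_pi) auto
  have "tan t \<le> tan (arctan \<eta>)" using assms lt by (intro tan_mono_le) auto
  then have "sin t / cos t \<le> \<eta>" unfolding tan_arctan by (simp add: tan_def)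
  then show ?thesis using c by (simp add: divide_le_eq mult.commute)
qed

lemma log1_in_sector:
  assumes w: "Im w > \<eta> * \<bar>Re w\<bar>" and eta: "\<eta> > 0"
  shows "arctan \<eta> < Im (log1 w)" "Im (log1 w) < pi - arctan \<eta>"
proof -
  have w0: "w \<noteq> 0" using w by auto
  define t where "t = Im (log1 w)"
  have polar: "Im w = exp (Re (log1 w)) * sin t" "Re w = exp (Re (log1 w)) * cos t"
    using exp_log1[OF w0] unfolding t_def by (metis Im_exp, metis Re_exp)
  have sc: "sin t > \<eta> * \<bar>cos t\<bar>"
    using w unfolding polar by (simp add: abs_mult mult.left_commute)
  have t: "0 < t" "t \<le> 2 * pi"
    unfolding t_def log1_def using w0 mpi_less_Im_Ln[of "- w"] Im_Ln_le_pi[of "- w"] by auto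
  have "sin t > 0" using sc eta by (smt (verit) abs_ge_zero mult_nonneg_nonneg)
  then have "t < pi" using t sin_le_zero[of t] by (cases "t = 2 * pi") force+
  show "arctan \<eta> < Im (log1 w)"
  proof (rule ccontr)
    assume "\<not> ?thesis"
    then have "sin t \<le> \<eta> * cos t" using sin_le_tan_bound t by (simp add: t_def)
    then show False using sc eta by (smt (verit) abs_ge_self mult_left_mono)
  qed
  show "Im (log1 w) < pi - arctan \<eta>"
  proof (rule ccontr)
    assume "\<not> ?thesis"
    then have "sin (pi - t) \<le> \<eta> * cos (pi - t)"
      using sin_le_tan_bound[of "pi - t"] \<open>t < pi\<close> by (simp add: t_def)
    then show False using sc eta by (smt (verit) abs_ge_minus_self cos_pi_minus sin_pi_minus mult_left_mono)
  qed
qed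

lemma Gamma_dom_inverse_sector:
  assumes "z \<in> Gamma_dom \<eta> M"
  shows "Im (- 1 / z) > \<eta> * \<bar>Re (- 1 / z)\<bar>"
proof -
  have z: "Im z > \<eta> * \<bar>Re z\<bar>" "z \<noteq> 0" using assms by (auto simp: Gamma_dom_def)
  then have n: "(cmod z)\<^sup>2 > 0" by simp
  have "\<eta> * \<bar>Re z\<bar> / (cmod z)\<^sup>2 < Im z / (cmod z)\<^sup>2"
    using z n by (simp add: divide_strict_right_mono)
  then show ?thesis by (simp add: Im_divide Re_divide cmod_power2 abs_divide)
qed

lemma norm_pow1: "w \<noteq> 0 \<Longrightarrow> norm (pow1 w p) = norm w powr p"
  unfolding pow1_def log1_def by (simp add: powr_def)

(* On Gamma_{eta,M}, |-1/z| < 1/M, so c (-1/z)^alpha eventually lies in any punctured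
   neighbourhood of 0: a property holding near 0 holds there for M large. *)
lemma eventually_at_0_on_Gamma_dom:
  assumes a: "\<alpha> > 0" and c: "c \<noteq> 0" and P: "eventually P (at 0)"
  shows "\<exists>M>0. \<forall>z\<in>Gamma_dom \<eta> M. P (c * pow1 (- 1 / z) \<alpha>)"
proof -
  obtain \<rho> where \<rho>: "\<rho> > 0" and P\<rho>: "\<And>x. x \<noteq> 0 \<Longrightarrow> norm x < \<rho> \<Longrightarrow> P x"
    using P unfolding eventually_at by auto
  define M where "M = (norm c / \<rho>) powr (1 / \<alpha>) + 1"
  have M: "M > 0" unfolding M_def by (smt (verit) powr_ge_zero)
  have "P (c * pow1 (- 1 / z) \<alpha>)" if z: "z \<in> Gamma_dom \<eta> M" for z
  proof (rule P\<rho>)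
    have "norm z > M" using z abs_Im_le_cmod[of z] by (auto simp: Gamma_dom_def)
    then have w: "- 1 / z \<noteq> 0" "norm (- 1 / z) < 1 / M"
      using M by (auto simp: norm_divide frac_less2)
    show "c * pow1 (- 1 / z) \<alpha> \<noteq> 0" using c by (simp add: pow1_def)
    have "norm (- 1 / z) powr \<alpha> < (1 / M) powr \<alpha>"
      using w a by (intro powr_less_mono2) auto
    also have "\<dots> = 1 / M powr \<alpha>" by (simp add: powr_divide)
    also have "\<dots> < \<rho> / norm c"
    proof -
      have "((norm c / \<rho>) powr (1 / \<alpha>)) powr \<alpha> < M powr \<alpha>"
        using a unfolding M_def by (intro powr_less_mono2) auto
      then have "norm c / \<rho> < M powr \<alpha>" using a c \<rho> by (simp add: powr_powr)
      then show ?thesis using c \<rho> M by (simp add: field_simps)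
    qed
    finally show "norm (c * pow1 (- 1 / z) \<alpha>) < \<rho>"
      using c w(1) by (simp add: norm_mult norm_pow1 field_simps)
  qed
  then show ?thesis using M by blast
qed

lemma near_zero_eventually:
  assumes "c > 0"
  shows "eventually (\<lambda>x::complex. norm x < 1 \<and> norm (Ln (1 - x)) < c) (at 0)"
proof -
  have "((\<lambda>x. Ln (1 - x)) \<longlongrightarrow> Ln (1 - 0)) (at (0::complex))"
    by (intro tendsto_Ln tendsto_intros) auto
  then have "eventually (\<lambda>x. dist (Ln (1 - x)) 0 < c) (at (0::complex))"
    using assms by (simp add: tendsto_iff)
  moreover have "eventually (\<lambda>x. dist x 0 < 1) (at (0::complex))"
    unfolding eventually_at by (intro exI[of _ 1]) auto
  ultimately show ?thesis by eventually_elim simp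
qed

theorem theorem3p1:
  fixes r u \<alpha> \<eta> :: real and s :: complex
  assumes "r > 0" and "u > 0" and "0 < \<alpha>" and "\<alpha> \<le> 2" and "\<eta> > 0" and "s \<noteq> 0"
  shows "\<exists>M>0. \<forall>z\<in>Gamma_dom \<eta> M.
           well_defined_at \<alpha> (complex_of_real u * s) u z \<and>
           well_defined_at \<alpha> (complex_of_real u * s) (u * r) z \<and>
           well_defined_at \<alpha> s r (F_fun \<alpha> (complex_of_real u * s) u z) \<and>
           F_fun \<alpha> s r (F_fun \<alpha> (complex_of_real u * s) u z) =
             F_fun \<alpha> (complex_of_real u * s) (u * r) z"
proof -
  note r = assms(1) and u = assms(2) and a = assms(3,4) and eta = assms(5) and s = assms(6)
  have us: "complex_of_real u * s \<noteq> 0" and ur: "u * r > 0" using u r s by auto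
  define \<beta> where "\<beta> = \<alpha> * arctan \<eta> / 2"
  have "\<beta> > 0" using a eta by (simp add: \<beta>_def)
  define good where "good x \<longleftrightarrow> norm x < 1 \<and> norm (Ln (1 - x)) < u * pi \<and>
      (\<forall>p\<in>{u, u * r}. root_quotient p x \<noteq> 0 \<and> \<bar>Im (Ln (root_quotient p x))\<bar> < \<beta>)" for x
  have "u * pi > 0" using u by simp
  have "eventually good (at 0)"
    using near_zero_eventually[OF \<open>u * pi > 0\<close>] root_quotient_eventually[OF u \<open>\<beta> > 0\<close>]
      root_quotient_eventually[OF ur \<open>\<beta> > 0\<close>]
    unfolding good_def by eventually_elim auto
  then obtain M where M: "M > 0"
    and near: "\<And>z. z \<in> Gamma_dom \<eta> M \<Longrightarrow> good (complex_of_real u * s * pow1 (- 1 / z) \<alpha>)"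
    using eventually_at_0_on_Gamma_dom[OF a(1) us] by blast
  show ?thesis
  proof (intro exI[of _ M] conjI M ballI)
    fix z assume z: "z \<in> Gamma_dom \<eta> M"
    define L where "L = log1 (- 1 / z)"
    have sector: "arctan \<eta> < Im L" "Im L < pi - arctan \<eta>"
      using log1_in_sector[OF Gamma_dom_inverse_sector[OF z] eta] by (simp_all add: L_def)
    have expL: "exp L = - 1 / z" unfolding L_def using z by (intro exp_log1) (auto simp: Gamma_dom_def)
    define x where "x = complex_of_real u * s * exp (of_real \<alpha> * L)"
    have "good x" using near[OF z] by (simp add: x_def L_def pow1_def)
    then have small: "norm x < 1" "norm (Ln (1 - x)) < u * pi"
      and q1: "root_quotient u x \<noteq> 0" "\<bar>Im (Ln (root_quotient u x))\<bar> < \<alpha> * arctan \<eta> / 2"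
      and q2: "root_quotient (u * r) x \<noteq> 0" "\<bar>Im (Ln (root_quotient (u * r) x))\<bar> < \<alpha> * arctan \<eta> / 2"
      by (simp_all add: good_def \<beta>_def)
    note G1 = G_fun_at_log_point[OF u a us sector expL x_def small(1) q1]
    note G2 = G_fun_at_log_point[OF ur a us sector expL x_def small(1) q2]
    have "- 1 / F_fun \<alpha> (complex_of_real u * s) u z = exp (L + Ln (root_quotient u x) / of_real \<alpha>)"
      unfolding F_fun_def G1(2) by simp
    note G3 = G_fun_at_composite[OF r u a s sector x_def small(2) q1 q2 this]
    show "well_defined_at \<alpha> (complex_of_real u * s) u z" by (fact G1(1))
    show "well_defined_at \<alpha> (complex_of_real u * s) (u * r) z" by (fact G2(1))
    show "well_defined_at \<alpha> s r (F_fun \<alpha> (complex_of_real u * s) u z)" by (fact G3(1))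
    show "F_fun \<alpha> s r (F_fun \<alpha> (complex_of_real u * s) u z) = F_fun \<alpha> (complex_of_real u * s) (u * r) z"
      using G2(2) G3(2) unfolding F_fun_def[of \<alpha> s r] F_fun_def[of \<alpha> _ "u * r"] by simp
  qed
qed

end
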